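(* Let $\bar{A}_{\tau,\sigma}$ have the form $$\bar{A}_{\tau,\sigma}=\alpha_{(0,0)}-\tfrac12\xi_1P_1(\sigma)+\tfrac12\xi_1P_1(\tau)+\sum_{\substack{i+j\ \text{even}\\ i+j>1}}\alpha_{(i,j)}P_i(\tau)P_j(\sigma),$$ with $\xi_1=\frac{1}{2\sqrt3}$ and real $\alpha_{(i,j)}$ (finitely many nonzero, or such that the series converges uniformly on $[0,1]^2$), and let $B_\tau=1$, $C_\tau=\tau$, $\bar{B}_\tau=1-\tau$. Let $(b_i,c_i)_{i=1}^s$ be a quadrature formula on $[0,1]$ with $b_{s+1-i}=b_i$ and $c_{s+1-i}=1-c_i$ for all $i$. Then the $s$-stage RKN method with nodes $c_i$, coefficients $\bar a_{ij}=b_j\bar{A}_{c_i,c_j}$, $\bar b_i=b_i(1-c_i)$ and weights $b_i$ ($i,j=1,\dots,s$) is symmetric.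
   Context: For $q''=f(t,q)$ with smooth $f:\mathbb{R}\times\mathbb{R}^d\to\mathbb{R}^d$, an $s$-stage RKN method with coefficients $(\bar a_{ij},\bar b_i,b_i,c_i)$ and step size $h$ is $$Q_i=q_0+hc_iq'_0+h^2\sum_{j=1}^s\bar a_{ij}f(t_0+c_jh,Q_j),\quad q_1=q_0+hq'_0+h^2\sum_{i=1}^s\bar b_if(t_0+c_ih,Q_i),\quad q'_1=q'_0+h\sum_{i=1}^sb_if(t_0+c_ih,Q_i).$$ A one-step method $\Phi_h$ is symmetric if $\Phi_h=\Phi_{-h}^{-1}$. $P_k$ is the normalized shifted Legendre polynomial: $P_0=1$, $P_k(x)=\frac{\sqrt{2k+1}}{k!}\frac{d^k}{dx^k}[(x^2-x)^k]$, orthonormal in $L^2[0,1]$; e.g. $P_1(x)=\sqrt3(2x-1)$. *)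

theory Defs
  imports "HOL-Analysis.Analysis"
begin

definition legP :: "nat \<Rightarrow> real \<Rightarrow> real" where
  "legP k x = sqrt (2 * real k + 1) / fact k * (deriv ^^ k) (\<lambda>y. (y^2 - y)^k) x"

text \<open>One step of the s-stage RKN method (coefficients abar, bbar, b, c; stages indexed 1..s)
  for q'' = f(t,q), started at time t0 with step size h, mapping (q0,p0) to (q1,p1)
  (p = q'). Since the method is implicit, this is expressed as a relation: there exist
  internal stages Q_1..Q_s solving the stage equations.\<close>
definition rkn_step ::
  "nat \<Rightarrow> (nat \<Rightarrow> nat \<Rightarrow> real) \<Rightarrow> (nat \<Rightarrow> real) \<Rightarrow> (nat \<Rightarrow> real) \<Rightarrow> (nat \<Rightarrow> real)
   \<Rightarrow> (real \<Rightarrow> 'v::real_vector \<Rightarrow> 'v) \<Rightarrow> real \<Rightarrow> real \<Rightarrow> 'v \<Rightarrow> 'v \<Rightarrow> 'v \<Rightarrow> 'v \<Rightarrow> bool" where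
  "rkn_step s abar bbar b c f t0 h q0 p0 q1 p1 \<longleftrightarrow>
     (\<exists>Q :: nat \<Rightarrow> 'v.
        (\<forall>i\<in>{1..s}. Q i = q0 + (h * c i) *\<^sub>R p0
                           + h^2 *\<^sub>R (\<Sum>j=1..s. abar i j *\<^sub>R f (t0 + c j * h) (Q j)))
      \<and> q1 = q0 + h *\<^sub>R p0 + h^2 *\<^sub>R (\<Sum>i=1..s. bbar i *\<^sub>R f (t0 + c i * h) (Q i))
      \<and> p1 = p0 + h *\<^sub>R (\<Sum>i=1..s. b i *\<^sub>R f (t0 + c i * h) (Q i)))"

definition Abar_partial :: "(nat \<times> nat \<Rightarrow> real) \<Rightarrow> nat \<Rightarrow> real \<times> real \<Rightarrow> real" where
  "Abar_partial \<alpha> N = (\<lambda>(\<tau>, \<sigma>).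
      \<alpha> (0,0) - 1/2 * (1 / (2 * sqrt 3)) * legP 1 \<sigma> + 1/2 * (1 / (2 * sqrt 3)) * legP 1 \<tau>
      + (\<Sum>(i,j)\<in>{(i,j). even (i+j) \<and> 1 < i+j \<and> i+j \<le> N}. \<alpha> (i,j) * legP i \<tau> * legP j \<sigma>))"

end

theory Submission
  imports Defs "HOL-Computational_Algebra.Polynomial"
begin

text \<open>Since \<open>P\<^sub>k(1 - x) = (-1)\<^sup>k P\<^sub>k(x)\<close>, every term \<open>P\<^sub>i(\<tau>) P\<^sub>j(\<sigma>)\<close> with \<open>i + j\<close> even is
  invariant under \<open>(\<tau>, \<sigma>) \<mapsto> (1 - \<tau>, 1 - \<sigma>)\<close>, and the two linear terms give
  \<open>A(1 - \<tau>, 1 - \<sigma>) = A(\<tau>, \<sigma>) - \<tau> + \<sigma>\<close>. Together with the symmetry of the quadrature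
  formula this is the classical coefficient condition for a symmetric RKN method: the
  step from \<open>(q\<^sub>1, p\<^sub>1)\<close> with step size \<open>-h\<close> is solved by the original internal stages
  taken in reverse order.\<close>

lemma higher_deriv_poly: "(deriv ^^ n) (poly p) = poly ((pderiv ^^ n) (p :: real poly))"
proof (induction n)
  case (Suc n)
  have deriv_poly: "deriv (poly q) = poly (pderiv q)" for q :: "real poly"
    by (rule ext, rule DERIV_imp_deriv, rule poly_DERIV)
  show ?case by (simp add: Suc.IH deriv_poly)
qed simp

lemma higher_pderiv_pcompose_reflect:
  fixes p :: "'a::idom poly"
  assumes "p \<circ>\<^sub>p [:1, -1:] = p"
  shows "(pderiv ^^ n) p \<circ>\<^sub>p [:1, -1:] = smult ((-1) ^ n) ((pderiv ^^ n) p)"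
proof (induction n)
  case 0
  then show ?case using assms by simp
next
  case (Suc n)
  have "pderiv ((pderiv ^^ n) p \<circ>\<^sub>p [:1, -1:]) = - ((pderiv ^^ Suc n) p \<circ>\<^sub>p [:1, -1:])"
    by (simp add: pderiv_pcompose pderiv_pCons)
  then show ?case using Suc by (simp add: pderiv_smult)
qed

lemma legP_reflect: "legP k (1 - x) = (-1) ^ k * legP k x"
proof -
  define p :: "real poly" where "p = [:0, -1, 1:] ^ k"
  have p: "(\<lambda>y. (y^2 - y)^k) = poly p"
    by (auto simp: p_def poly_power algebra_simps power2_eq_square)
  have "p \<circ>\<^sub>p [:1, -1:] = p"
    by (rule poly_ext) (simp add: p_def poly_pcompose poly_power algebra_simps power2_eq_square)
  then have "poly ((pderiv ^^ k) p) (1 - x) = (-1) ^ k * poly ((pderiv ^^ k) p) x"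
    using poly_pcompose[of "(pderiv ^^ k) p" "[:1, -1:]" x]
    by (simp add: higher_pderiv_pcompose_reflect)
  then show ?thesis
    by (simp add: legP_def p higher_deriv_poly)
qed

lemma legP_1: "legP 1 x = sqrt 3 * (2 * x - 1)"
proof -
  have "deriv (\<lambda>y::real. (y^2 - y)^1) x = 2 * x - 1"
    by (rule DERIV_imp_deriv) (auto intro!: derivative_eq_intros)
  then show ?thesis by (simp add: legP_def)
qed

lemma Abar_partial_reflect:
  "Abar_partial \<alpha> N (1 - \<tau>, 1 - \<sigma>) = Abar_partial \<alpha> N (\<tau>, \<sigma>) - \<tau> + \<sigma>"
proof -
  let ?E = "{(i, j). even (i + j) \<and> 1 < i + j \<and> i + j \<le> N}"
  have even_terms: "(\<Sum>(i, j)\<in>?E. \<alpha> (i, j) * legP i (1 - \<tau>) * legP j (1 - \<sigma>))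
      = (\<Sum>(i, j)\<in>?E. \<alpha> (i, j) * legP i \<tau> * legP j \<sigma>)"
  proof (rule sum.cong[OF refl], clarify)
    fix i j :: nat
    assume "even (i + j)"
    then have "(-1::real) ^ i * (-1) ^ j = 1"
      by (simp flip: power_add)
    then show "\<alpha> (i, j) * legP i (1 - \<tau>) * legP j (1 - \<sigma>) = \<alpha> (i, j) * legP i \<tau> * legP j \<sigma>"
      unfolding legP_reflect by (metis mult.commute mult.left_commute mult_1)
  qed
  have sqrt3: "sqrt 3 * (sqrt 3 * x) = 3 * x" for x :: real
    by (simp flip: mult.assoc)
  show ?thesis
    unfolding Abar_partial_def split even_terms legP_1
    by (simp add: field_simps sqrt3)
qed

lemma Abar_limit_reflect:
  assumes "uniform_limit ({0..1} \<times> {0..1}) (Abar_partial \<alpha>) (\<lambda>(\<tau>, \<sigma>). A \<tau> \<sigma>) sequentially"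
    and "\<tau> \<in> {0..1}" "\<sigma> \<in> {0..1}"
  shows "A (1 - \<tau>) (1 - \<sigma>) = A \<tau> \<sigma> - \<tau> + \<sigma>"
proof -
  have "(\<lambda>N. Abar_partial \<alpha> N (\<tau>, \<sigma>)) \<longlonglongrightarrow> A \<tau> \<sigma>"
    using tendsto_uniform_limitI[OF assms(1), of "(\<tau>, \<sigma>)"] assms by simp
  then have "(\<lambda>N. Abar_partial \<alpha> N (1 - \<tau>, 1 - \<sigma>)) \<longlonglongrightarrow> A \<tau> \<sigma> - \<tau> + \<sigma>"
    unfolding Abar_partial_reflect by (intro tendsto_intros)
  moreover have "(\<lambda>N. Abar_partial \<alpha> N (1 - \<tau>, 1 - \<sigma>)) \<longlonglongrightarrow> A (1 - \<tau>) (1 - \<sigma>)"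
    using tendsto_uniform_limitI[OF assms(1), of "(1 - \<tau>, 1 - \<sigma>)"] assms by simp
  ultimately show ?thesis
    using LIMSEQ_unique by blast
qed

lemma sum_reversed_stages:
  fixes f :: "real \<Rightarrow> 'v::real_vector \<Rightarrow> 'v" and s :: nat
  assumes "\<forall>i\<in>{1..s}. c (s + 1 - i) = 1 - c i"
  shows "(\<Sum>i=1..s. w i *\<^sub>R f (t0 + h + c i * - h) (Q (s + 1 - i)))
       = (\<Sum>i=1..s. w (s + 1 - i) *\<^sub>R f (t0 + c i * h) (Q i))"
proof -
  have "(\<Sum>i=1..s. w i *\<^sub>R f (t0 + h + c i * - h) (Q (s + 1 - i)))
      = (\<Sum>i=1..s. w i *\<^sub>R f (t0 + c (s + 1 - i) * h) (Q (s + 1 - i)))"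
  proof (intro sum.cong refl)
    fix i assume "i \<in> {1..s}"
    with assms have ci: "c (s + 1 - i) = 1 - c i" by blast
    show "w i *\<^sub>R f (t0 + h + c i * - h) (Q (s + 1 - i))
        = w i *\<^sub>R f (t0 + c (s + 1 - i) * h) (Q (s + 1 - i))"
      unfolding ci by (simp add: algebra_simps)
  qed
  also have "\<dots> = (\<Sum>i=1..s. w (s + 1 - i) *\<^sub>R f (t0 + c i * h) (Q i))"
    by (rule sum.reindex_bij_witness[where i = "\<lambda>i. s + 1 - i" and j = "\<lambda>i. s + 1 - i"]) auto
  finally show ?thesis .
qed

lemma sum_abar_reflect:
  fixes v :: "nat \<Rightarrow> 'v::real_vector" and s :: nat
  assumes abar: "\<forall>i\<in>{1..s}. \<forall>j\<in>{1..s}.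
                   abar (s + 1 - i) (s + 1 - j) = abar i j - bbar j + (1 - c i) * b j"
    and k: "k \<in> {1..s}"
  shows "(\<Sum>j=1..s. abar (s + 1 - k) (s + 1 - j) *\<^sub>R v j)
       = (\<Sum>j=1..s. abar k j *\<^sub>R v j) - (\<Sum>j=1..s. bbar j *\<^sub>R v j) + (1 - c k) *\<^sub>R (\<Sum>j=1..s. b j *\<^sub>R v j)"
proof -
  have "(\<Sum>j=1..s. abar (s + 1 - k) (s + 1 - j) *\<^sub>R v j)
      = (\<Sum>j=1..s. (abar k j - bbar j + (1 - c k) * b j) *\<^sub>R v j)"
    using abar k by (intro sum.cong) auto
  then show ?thesis
    by (simp add: scaleR_diff_left scaleR_add_left sum.distrib sum_subtractf scaleR_sum_right)
qed

lemma rkn_step_reverse: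
  fixes f :: "real \<Rightarrow> 'v::real_vector \<Rightarrow> 'v"
  assumes b: "\<forall>i\<in>{1..s}. b (s + 1 - i) = b i"
    and c: "\<forall>i\<in>{1..s}. c (s + 1 - i) = 1 - c i"
    and bbar: "\<forall>i\<in>{1..s}. bbar (s + 1 - i) = b i - bbar i"
    and abar: "\<forall>i\<in>{1..s}. \<forall>j\<in>{1..s}.
                 abar (s + 1 - i) (s + 1 - j) = abar i j - bbar j + (1 - c i) * b j"
    and step: "rkn_step s abar bbar b c f t0 h q0 p0 q1 p1"
  shows "rkn_step s abar bbar b c f (t0 + h) (- h) q1 p1 q0 p0"
proof -
  obtain Q where
    stages: "\<forall>i\<in>{1..s}. Q i = q0 + (h * c i) *\<^sub>R p0
                           + h^2 *\<^sub>R (\<Sum>j=1..s. abar i j *\<^sub>R f (t0 + c j * h) (Q j))"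
    and q1: "q1 = q0 + h *\<^sub>R p0 + h^2 *\<^sub>R (\<Sum>i=1..s. bbar i *\<^sub>R f (t0 + c i * h) (Q i))"
    and p1: "p1 = p0 + h *\<^sub>R (\<Sum>i=1..s. b i *\<^sub>R f (t0 + c i * h) (Q i))"
    using step unfolding rkn_step_def by blast
  define SB where "SB = (\<Sum>i=1..s. b i *\<^sub>R f (t0 + c i * h) (Q i))"
  define SBbar where "SBbar = (\<Sum>i=1..s. bbar i *\<^sub>R f (t0 + c i * h) (Q i))"
  have p1': "p1 = p0 + h *\<^sub>R SB" and q1': "q1 = q0 + h *\<^sub>R p0 + h^2 *\<^sub>R SBbar"
    by (simp_all add: p1 q1 SB_def SBbar_def)
  have b_rev: "(\<Sum>i=1..s. b (s + 1 - i) *\<^sub>R f (t0 + c i * h) (Q i)) = SB"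
    using b by (auto simp: SB_def intro!: sum.cong)
  have p0: "p0 = p1 + (- h) *\<^sub>R (\<Sum>i=1..s. b i *\<^sub>R f (t0 + h + c i * - h) (Q (s + 1 - i)))"
    unfolding sum_reversed_stages[OF c] b_rev by (simp add: p1')
  have bbar_rev: "(\<Sum>i=1..s. bbar (s + 1 - i) *\<^sub>R f (t0 + c i * h) (Q i)) = SB - SBbar"
    using bbar by (auto simp: SB_def SBbar_def simp flip: sum_subtractf scaleR_diff_left intro!: sum.cong)
  have q0: "q0 = q1 + (- h) *\<^sub>R p1
      + (- h)^2 *\<^sub>R (\<Sum>i=1..s. bbar i *\<^sub>R f (t0 + h + c i * - h) (Q (s + 1 - i)))"
    unfolding sum_reversed_stages[OF c] bbar_rev by (simp add: p1' q1' algebra_simps power2_eq_square)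
  have stages_rev: "Q (s + 1 - i) = q1 + (- h * c i) *\<^sub>R p1
      + (- h)^2 *\<^sub>R (\<Sum>j=1..s. abar i j *\<^sub>R f (t0 + h + c j * - h) (Q (s + 1 - j)))"
    if i: "i \<in> {1..s}" for i
  proof -
    define k where "k = s + 1 - i"
    have k: "k \<in> {1..s}" "s + 1 - k = i" and ci: "c i = 1 - c k"
      using i c by (auto simp: k_def)
    have Qk: "Q k = q0 + (h * c k) *\<^sub>R p0 + h^2 *\<^sub>R (\<Sum>j=1..s. abar k j *\<^sub>R f (t0 + c j * h) (Q j))"
      using stages k(1) by blast
    show ?thesis
      unfolding sum_reversed_stages[OF c] k_def[symmetric] Qk ci
        sum_abar_reflect[OF abar k(1), unfolded k(2)] SB_def[symmetric] SBbar_def[symmetric]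
      by (simp add: p1' q1' algebra_simps power2_eq_square)
  qed
  show ?thesis
    unfolding rkn_step_def using stages_rev p0 q0 by (intro exI[of _ "\<lambda>i. Q (s + 1 - i)"]) blast
qed

theorem corollary4p2:
  fixes \<alpha> :: "nat \<times> nat \<Rightarrow> real"
    and A :: "real \<Rightarrow> real \<Rightarrow> real"
    and s :: nat and b c :: "nat \<Rightarrow> real"
    and f :: "real \<Rightarrow> real ^ 'd \<Rightarrow> real ^ 'd"
    and t0 h :: real and q0 p0 q1 p1 :: "real ^ 'd"
  assumes A_def: "uniform_limit ({0..1} \<times> {0..1}) (Abar_partial \<alpha>) (\<lambda>(\<tau>, \<sigma>). A \<tau> \<sigma>) sequentially"
    and nodes: "\<forall>i\<in>{1..s}. c i \<in> {0..1}"
    and symb: "\<forall>i\<in>{1..s}. b (s + 1 - i) = b i"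
    and symc: "\<forall>i\<in>{1..s}. c (s + 1 - i) = 1 - c i"
    and step: "rkn_step s (\<lambda>i j. b j * A (c i) (c j)) (\<lambda>i. b i * (1 - c i)) b c f t0 h q0 p0 q1 p1"
  shows "rkn_step s (\<lambda>i j. b j * A (c i) (c j)) (\<lambda>i. b i * (1 - c i)) b c f (t0 + h) (- h) q1 p1 q0 p0"
proof (rule rkn_step_reverse[OF symb symc _ _ step]; intro ballI)
  fix i j assume i: "i \<in> {1..s}" and j: "j \<in> {1..s}"
  have b': "b (s + 1 - j) = b j" and ci: "c (s + 1 - i) = 1 - c i" and cj: "c (s + 1 - j) = 1 - c j"
    using symb symc i j by blast+
  have A_reflect: "A (1 - c i) (1 - c j) = A (c i) (c j) - c i + c j"
    using Abar_limit_reflect[OF A_def] nodes i j by blast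
  show "b (s + 1 - j) * A (c (s + 1 - i)) (c (s + 1 - j))
      = b j * A (c i) (c j) - b j * (1 - c j) + (1 - c i) * b j"
    unfolding b' ci cj A_reflect by (simp add: algebra_simps)
next
  fix i assume "i \<in> {1..s}"
  then have bi: "b (s + 1 - i) = b i" and ci: "c (s + 1 - i) = 1 - c i"
    using symb symc by blast+
  show "b (s + 1 - i) * (1 - c (s + 1 - i)) = b i - b i * (1 - c i)"
    unfolding bi ci by (simp add: algebra_simps)
qed

end
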